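(* Suppose $f$ satisfies (I), $f(\cdot,i,\mathbf q)\in C^1([0,\infty))$ for all $i,\mathbf q$, $f_t$ satisfies (I), and condition (R) holds. Let $Q^*\in\mathcal Q$ be a weak equilibrium and let $R=\{(i,Q)\in S\times(\mathcal Q\setminus\{Q^*\}):\Gamma^{Q^*}_i(Q^*_i)=\Gamma^{Q^*}_i(Q_i)\}$. If $\Lambda^{Q^*}(i,Q^* )>\Lambda^{Q^*}(i,Q)$ for all $(i,Q)\in R$, then $Q^*$ is a strong equilibrium. If $\Lambda^{Q^*}(i,Q^* )<\Lambda^{Q^*}(i,Q)$ for some $(i,Q)\in R$, then $Q^*$ is not a strong equilibrium.
   Context: Let $S=\{1,\dots,N\}$. For $i\in S$ let $E_i=\{q\in\mathbb R^N: q_j\ge0\text{ for }j\ne i,\ q_i=-\sum_{j\ne i}q_j\}$ and $D_i\subseteq E_i$ given; $\mathcal Q=\{Q\in\mathbb R^{N\times N}: Q_i\in D_i\ \forall i\}$, $Q_i$ the $i$-th row. For $Q\in\mathcal Q$, $X$ is a time-homogeneous continuous-time Markov chain on $S$ with generator $Q$, $\mathbb E_{i,Q}$ the expectation given $X_0=i$. A payoff function $f$ assigns $f(t,i,\mathbf q)\in\mathbb R$ to $t\ge0,i\in S,\mathbf q\in D_i$. Condition (I) for $g$: $\int_0^\infty\sup_{i\in S,\mathbf q\in D_i,\|\mathbf q\|\le c}|g(t,i,\mathbf q)|dt<\infty$ for all $c>0$. Condition (R): there is $r(t,\varepsilon;i,\mathbf q)$, continuous in $\varepsilon$, with $|f(t+\varepsilon,i,\mathbf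 q)-f(t,i,\mathbf q)-\varepsilon f_t(t,i,\mathbf q)|\le r(t,\varepsilon;i,\mathbf q)$, $\int_0^\infty r(t,\varepsilon;i,\mathbf q)dt<\infty$ for small $\varepsilon>0$, and $\varepsilon\mapsto r/\varepsilon$ nondecreasing. $F(i,Q)=\mathbb E_{i,Q}[\int_0^\infty f(t,X_t,Q_{X_t})dt]$, $G(i,Q)=\mathbb E_{i,Q}[\int_0^\infty f_t(t,X_t,Q_{X_t})dt]$, with vectors $F(Q),G(Q)\in\mathbb R^N$. $Q\otimes_\varepsilon Q'$: generator $Q$ on $[0,\varepsilon]$ then $Q'$ on $(\varepsilon,\infty)$, with expected payoff $F(i,Q\otimes_\varepsilon Q')$. Weak equilibrium: $\liminf_{\varepsilon\downarrow0}\varepsilon^{-1}(F(i,Q^* )-F(i,Q\otimes_\varepsilon Q^* ))\ge0$ for all $Q,i$. Strong equilibrium: for every $i,Q$ there is $\varepsilon>0$ with $F(i,Q^* )\ge F(i,Q\otimes_{\varepsilon'}Q^* )$ for all $0<\varepsilon'\le\varepsilon$. $\Gamma^{Q^*}_i(\mathbf q)=f(0,i,\mathbf q)+\mathbf q\cdot F(Q^* )$; $\Gamma^{Q^*}(Q)=(\Gamma^{Q^*}_1(Q_1),\dots,\Gamma^{Q^*}_N(Q_N))$; $\Lambda^{Q^*}(i,Q)=f_t(0,i,Q_i)+Q_i\cdot(2G(Q^* )+\Gamma^{Q^*}(Q))$. *)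

theory Defs
  imports "HOL-Analysis.Analysis"
begin

text \<open>State space S is a finite type 'n; generators are real^'n^'n, rows Q $ i.\<close>

definition E_set :: "'n::finite \<Rightarrow> (real^'n) set" where
  "E_set i = {q. (\<forall>j. j \<noteq> i \<longrightarrow> q $ j \<ge> 0) \<and> q $ i = - (\<Sum>j\<in>UNIV - {i}. q $ j)}"

definition gens :: "('n::finite \<Rightarrow> (real^'n) set) \<Rightarrow> (real^'n^'n) set" where
  "gens D = {Q. \<forall>i. Q $ i \<in> D i}"

fun mpow :: "real^'n::finite^'n \<Rightarrow> nat \<Rightarrow> real^'n^'n" where
  "mpow Q 0 = mat 1"
| "mpow Q (Suc k) = Q ** mpow Q k"

text \<open>Transition matrix P(t) = exp(tQ) of the chain with generator Q.\<close>
definition trans_mat :: "real \<Rightarrow> real^'n::finite^'n \<Rightarrow> real^'n^'n" where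
  "trans_mat t Q = (\<Sum>k. (t ^ k / fact k) *\<^sub>R mpow Q k)"

definition cond_I :: "('n::finite \<Rightarrow> (real^'n) set) \<Rightarrow> (real \<Rightarrow> 'n \<Rightarrow> real^'n \<Rightarrow> real) \<Rightarrow> bool" where
  "cond_I D g \<longleftrightarrow> (\<forall>c>0.
     let h = (\<lambda>t. SUP iq\<in>{(i,q). q \<in> D i \<and> norm q \<le> c}. ennreal \<bar>g t (fst iq) (snd iq)\<bar>)
     in (\<lambda>t. h t * indicator {0..} t) \<in> borel_measurable lborel
        \<and> (\<integral>\<^sup>+ t. h t * indicator {0..} t \<partial>lborel) < \<infinity>)"

definition cond_R :: "('n::finite \<Rightarrow> (real^'n) set) \<Rightarrow> (real \<Rightarrow> 'n \<Rightarrow> real^'n \<Rightarrow> real)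
     \<Rightarrow> (real \<Rightarrow> 'n \<Rightarrow> real^'n \<Rightarrow> real) \<Rightarrow> bool" where
  "cond_R D f ft \<longleftrightarrow> (\<exists>r :: real \<Rightarrow> real \<Rightarrow> 'n \<Rightarrow> real^'n \<Rightarrow> real.
     (\<forall>t\<ge>0. \<forall>i. \<forall>q\<in>D i. continuous_on {0<..} (\<lambda>\<epsilon>. r t \<epsilon> i q))
   \<and> (\<forall>t\<ge>0. \<forall>\<epsilon>>0. \<forall>i. \<forall>q\<in>D i.
        \<bar>f (t + \<epsilon>) i q - f t i q - \<epsilon> * ft t i q\<bar> \<le> r t \<epsilon> i q)
   \<and> (\<forall>i. \<forall>q\<in>D i. \<exists>\<epsilon>0>0. \<forall>\<epsilon>\<in>{0<..\<epsilon>0}.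
        set_integrable lborel {0..} (\<lambda>t. r t \<epsilon> i q))
   \<and> (\<forall>t\<ge>0. \<forall>i. \<forall>q\<in>D i. mono_on {0<..} (\<lambda>\<epsilon>. r t \<epsilon> i q / \<epsilon>)))"

text \<open>F(i,Q) = E_{i,Q}[int_0^oo g(t,X_t,Q_{X_t}) dt], written via the transition matrices.\<close>
definition payoff :: "(real \<Rightarrow> 'n::finite \<Rightarrow> real^'n \<Rightarrow> real) \<Rightarrow> real^'n^'n \<Rightarrow> 'n \<Rightarrow> real" where
  "payoff g Q i = (LINT t:{0..}|lborel. (\<Sum>j\<in>UNIV. trans_mat t Q $ i $ j * g t j (Q $ j)))"

text \<open>Expected payoff of Q \<otimes>_eps Q': generator Q on [0,eps], then Q' on (eps,oo).\<close>
definition payoff_sw :: "(real \<Rightarrow> 'n::finite \<Rightarrow> real^'n \<Rightarrow> real) \<Rightarrow> real \<Rightarrow> real^'n^'n \<Rightarrow> real^'n^'n \<Rightarrow> 'n \<Rightarrow> real" where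
  "payoff_sw g \<epsilon> Q Q' i =
     (LINT t:{0..\<epsilon>}|lborel. (\<Sum>j\<in>UNIV. trans_mat t Q $ i $ j * g t j (Q $ j)))
   + (LINT t:{\<epsilon><..}|lborel. (\<Sum>j\<in>UNIV. (trans_mat \<epsilon> Q ** trans_mat (t - \<epsilon>) Q') $ i $ j * g t j (Q' $ j)))"

definition payoff_vec :: "(real \<Rightarrow> 'n::finite \<Rightarrow> real^'n \<Rightarrow> real) \<Rightarrow> real^'n^'n \<Rightarrow> real^'n" where
  "payoff_vec g Q = (\<chi> j. payoff g Q j)"

definition weak_eq :: "('n::finite \<Rightarrow> (real^'n) set) \<Rightarrow> (real \<Rightarrow> 'n \<Rightarrow> real^'n \<Rightarrow> real) \<Rightarrow> real^'n^'n \<Rightarrow> bool" where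
  "weak_eq D f Qs \<longleftrightarrow> (\<forall>Q\<in>gens D. \<forall>i.
     Liminf (at_right 0) (\<lambda>\<epsilon>. ereal ((payoff f Qs i - payoff_sw f \<epsilon> Q Qs i) / \<epsilon>)) \<ge> 0)"

definition strong_eq :: "('n::finite \<Rightarrow> (real^'n) set) \<Rightarrow> (real \<Rightarrow> 'n \<Rightarrow> real^'n \<Rightarrow> real) \<Rightarrow> real^'n^'n \<Rightarrow> bool" where
  "strong_eq D f Qs \<longleftrightarrow> (\<forall>Q\<in>gens D. \<forall>i. \<exists>\<epsilon>>0. \<forall>\<epsilon>'. 0 < \<epsilon>' \<and> \<epsilon>' \<le> \<epsilon> \<longrightarrow>
     payoff f Qs i \<ge> payoff_sw f \<epsilon>' Q Qs i)"

definition Gamma :: "(real \<Rightarrow> 'n::finite \<Rightarrow> real^'n \<Rightarrow> real) \<Rightarrow> real^'n^'n \<Rightarrow> 'n \<Rightarrow> real^'n \<Rightarrow> real" where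
  "Gamma f Qs i q = f 0 i q + q \<bullet> payoff_vec f Qs"

definition Gamma_vec :: "(real \<Rightarrow> 'n::finite \<Rightarrow> real^'n \<Rightarrow> real) \<Rightarrow> real^'n^'n \<Rightarrow> real^'n^'n \<Rightarrow> real^'n" where
  "Gamma_vec f Qs Q = (\<chi> j. Gamma f Qs j (Q $ j))"

definition Lambda :: "(real \<Rightarrow> 'n::finite \<Rightarrow> real^'n \<Rightarrow> real) \<Rightarrow> (real \<Rightarrow> 'n \<Rightarrow> real^'n \<Rightarrow> real)
     \<Rightarrow> real^'n^'n \<Rightarrow> 'n \<Rightarrow> real^'n^'n \<Rightarrow> real" where
  "Lambda f ft Qs i Q = ft 0 i (Q $ i) + (Q $ i) \<bullet> (2 *\<^sub>R payoff_vec ft Qs + Gamma_vec f Qs Q)"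

end

(*
  Write Qs for the candidate equilibrium Q^* and d(e) = F(i,Qs) - F(i, Q (x)_e Qs) for its gain
  over a deviation Q used on [0,e].  Splitting both payoffs at time e gives
    d(e) = int_0^e (expected reward rate under Qs minus under Q) + sum_j (P^Qs_e - P^Q_e)(i,j) H_j(e),
  where H_j(e) is the payoff collected after time e from state j under Qs.  Condition (R) and
  dominated convergence give H_j(e) = F_j + e G_j + o(e) with F = F(Qs) and G = G(Qs); the
  matrix exponential gives P^Q_e = I + e Q + e^2/2 Q^2 + o(e^2); and the running integral is
  expanded by differentiating the reward rate at 0.  Altogether
    d(e) = e (Gamma_i(Qs_i) - Gamma_i(Q_i)) + e^2/2 (Lambda(i,Qs) - Lambda(i,Q)) + o(e^2).
  For a weak equilibrium the first coefficient is nonnegative; on R it vanishes, and the sign of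
  the second coefficient then decides the sign of d(e) for all small e > 0.
*)

theory Submission
  imports Defs "HOL-Library.Landau_Symbols"
begin

section \<open>Square matrices as a Banach algebra\<close>

definition row_sum_norm :: "real^'n::finite^'n \<Rightarrow> real" where
  "row_sum_norm A = Max (range (\<lambda>i. \<Sum>j\<in>UNIV. \<bar>A $ i $ j\<bar>))"

lemma row_sum_le_row_sum_norm: "(\<Sum>j\<in>UNIV. \<bar>A $ i $ j\<bar>) \<le> row_sum_norm A"
  unfolding row_sum_norm_def by (rule Max_ge) auto

lemma row_sum_norm_le: "(\<And>i. (\<Sum>j\<in>UNIV. \<bar>A $ i $ j\<bar>) \<le> c) \<Longrightarrow> row_sum_norm A \<le> c"
  unfolding row_sum_norm_def by (rule Max.boundedI) auto

lemma abs_entry_le_row_sum_norm: "\<bar>A $ i $ j\<bar> \<le> row_sum_norm A"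
  by (rule order_trans[OF member_le_sum row_sum_le_row_sum_norm]) auto

lemma row_sum_norm_nonneg: "0 \<le> row_sum_norm A"
  by (rule order_trans[OF abs_ge_zero abs_entry_le_row_sum_norm])

lemma row_sum_norm_eq_0_iff: "row_sum_norm A = 0 \<longleftrightarrow> A = 0"
proof
  assume "row_sum_norm A = 0"
  then show "A = 0"
    using abs_entry_le_row_sum_norm[of A] by (simp add: vec_eq_iff)
qed (simp add: antisym row_sum_norm_le row_sum_norm_nonneg)

lemma row_sum_norm_triangle: "row_sum_norm (A + B) \<le> row_sum_norm A + row_sum_norm B"
proof (rule row_sum_norm_le)
  fix i
  have "(\<Sum>j\<in>UNIV. \<bar>(A + B) $ i $ j\<bar>) \<le> (\<Sum>j\<in>UNIV. \<bar>A $ i $ j\<bar>) + (\<Sum>j\<in>UNIV. \<bar>B $ i $ j\<bar>)"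
    by (simp add: sum.distrib[symmetric] sum_mono abs_triangle_ineq)
  then show "(\<Sum>j\<in>UNIV. \<bar>(A + B) $ i $ j\<bar>) \<le> row_sum_norm A + row_sum_norm B"
    using row_sum_le_row_sum_norm[of A i] row_sum_le_row_sum_norm[of B i] by linarith
qed

lemma row_sum_norm_scaleR: "row_sum_norm (r *\<^sub>R A) = \<bar>r\<bar> * row_sum_norm A"
proof -
  have "row_sum_norm (r *\<^sub>R A) = Max ((*) \<bar>r\<bar> ` range (\<lambda>i. \<Sum>j\<in>UNIV. \<bar>A $ i $ j\<bar>))"
    by (simp add: row_sum_norm_def abs_mult sum_distrib_left image_image)
  also have "\<dots> = \<bar>r\<bar> * row_sum_norm A"
    unfolding row_sum_norm_def by (rule mono_Max_commute[symmetric]) (auto simp: mono_def mult_left_mono)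
  finally show ?thesis .
qed

lemma row_sum_norm_mult: "row_sum_norm (A ** B) \<le> row_sum_norm A * row_sum_norm B"
proof (rule row_sum_norm_le)
  fix i
  have "(\<Sum>j\<in>UNIV. \<bar>(A ** B) $ i $ j\<bar>) \<le> (\<Sum>j\<in>UNIV. \<Sum>l\<in>UNIV. \<bar>A $ i $ l\<bar> * \<bar>B $ l $ j\<bar>)"
    by (intro sum_mono) (auto simp: matrix_matrix_mult_def abs_mult[symmetric] intro: sum_abs)
  also have "\<dots> = (\<Sum>l\<in>UNIV. \<bar>A $ i $ l\<bar> * (\<Sum>j\<in>UNIV. \<bar>B $ l $ j\<bar>))"
    by (subst sum.swap) (simp add: sum_distrib_left)
  also have "\<dots> \<le> (\<Sum>l\<in>UNIV. \<bar>A $ i $ l\<bar> * row_sum_norm B)"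
    by (intro sum_mono mult_left_mono row_sum_le_row_sum_norm) auto
  also have "\<dots> \<le> row_sum_norm A * row_sum_norm B"
    using row_sum_le_row_sum_norm[of A i] row_sum_norm_nonneg[of B]
    by (simp add: sum_distrib_right[symmetric] mult_right_mono)
  finally show "(\<Sum>j\<in>UNIV. \<bar>(A ** B) $ i $ j\<bar>) \<le> row_sum_norm A * row_sum_norm B" .
qed

lemma row_sum_norm_mat_1: "row_sum_norm (mat 1 :: real^'n::finite^'n) = 1"
proof -
  have "(\<Sum>j\<in>UNIV. \<bar>(mat 1 :: real^'n^'n) $ i $ j\<bar>) = 1" for i
    by (simp add: mat_def if_distrib cong: if_cong)
  then show ?thesis
    by (simp add: row_sum_norm_def)
qed

lemma row_sum_norm_le_norm: "row_sum_norm A \<le> real CARD('n) * norm A"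
  for A :: "real^'n::finite^'n"
proof (rule row_sum_norm_le)
  fix i
  have "(\<Sum>j\<in>UNIV. \<bar>A $ i $ j\<bar>) \<le> (\<Sum>j\<in>(UNIV::'n set). norm A)"
    by (intro sum_mono order_trans[OF component_le_norm_cart Finite_Cartesian_Product.norm_nth_le])
  then show "(\<Sum>j\<in>UNIV. \<bar>A $ i $ j\<bar>) \<le> real CARD('n) * norm A" by simp
qed

text \<open>The exponential needs a \<^class>\<open>real_normed_algebra_1\<close>; \<^typ>\<open>real^'n^'n\<close> has no
  multiplication instance, and its Euclidean norm gives the identity norm \<open>sqrt n\<close>. So square
  matrices get a copy of the type, normed by the maximal absolute row sum.\<close>

typedef 'n sqmat = "UNIV :: (real^'n^'n) set" ..

setup_lifting type_definition_sqmat

instantiation sqmat :: (finite) real_normed_algebra_1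
begin

lift_definition zero_sqmat :: "'a sqmat" is 0 .
lift_definition one_sqmat :: "'a sqmat" is "mat 1" .
lift_definition plus_sqmat :: "'a sqmat \<Rightarrow> 'a sqmat \<Rightarrow> 'a sqmat" is "(+)" .
lift_definition minus_sqmat :: "'a sqmat \<Rightarrow> 'a sqmat \<Rightarrow> 'a sqmat" is "(-)" .
lift_definition uminus_sqmat :: "'a sqmat \<Rightarrow> 'a sqmat" is uminus .
lift_definition times_sqmat :: "'a sqmat \<Rightarrow> 'a sqmat \<Rightarrow> 'a sqmat" is "(**)" .
lift_definition scaleR_sqmat :: "real \<Rightarrow> 'a sqmat \<Rightarrow> 'a sqmat" is "(*\<^sub>R)" .
lift_definition norm_sqmat :: "'a sqmat \<Rightarrow> real" is row_sum_norm .

definition sgn_sqmat :: "'a sqmat \<Rightarrow> 'a sqmat" where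
  "sgn_sqmat A = inverse (norm A) *\<^sub>R A"

definition dist_sqmat :: "'a sqmat \<Rightarrow> 'a sqmat \<Rightarrow> real" where
  "dist_sqmat A B = norm (A - B)"

definition uniformity_sqmat :: "('a sqmat \<times> 'a sqmat) filter" where
  "uniformity_sqmat = (INF e\<in>{0<..}. principal {(A, B). dist A B < e})"

definition open_sqmat :: "'a sqmat set \<Rightarrow> bool" where
  "open_sqmat U \<longleftrightarrow> (\<forall>A\<in>U. \<forall>\<^sub>F (A', B) in uniformity. A' = A \<longrightarrow> B \<in> U)"

instance
proof
  fix A B C :: "'a sqmat" and r s :: real
  show "A + B + C = A + (B + C)" by transfer (simp add: add.assoc)
  show "A + B = B + A" by transfer (simp add: add.commute)
  show "0 + A = A" by transfer simp
  show "- A + A = 0" by transfer simp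
  show "A - B = A + - B" by transfer simp
  show "r *\<^sub>R (A + B) = r *\<^sub>R A + r *\<^sub>R B" by transfer (simp add: scaleR_add_right)
  show "(r + s) *\<^sub>R A = r *\<^sub>R A + s *\<^sub>R A" by transfer (simp add: scaleR_add_left)
  show "r *\<^sub>R s *\<^sub>R A = (r * s) *\<^sub>R A" by transfer simp
  show "1 *\<^sub>R A = A" by transfer simp
  show "A * B * C = A * (B * C)" by transfer (simp add: matrix_mul_assoc)
  show "(A + B) * C = A * C + B * C"
    by transfer (simp add: matrix_matrix_mult_def vec_eq_iff sum.distrib distrib_right)
  show "A * (B + C) = A * B + A * C" by transfer (simp add: matrix_add_ldistrib)
  show "r *\<^sub>R A * B = r *\<^sub>R (A * B)" by transfer (simp add: scalar_matrix_assoc)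
  show "A * r *\<^sub>R B = r *\<^sub>R (A * B)" by transfer (simp add: matrix_scalar_ac scalar_matrix_assoc)
  show "1 * A = A" by transfer simp
  show "A * 1 = A" by transfer simp
  show "(0::'a sqmat) \<noteq> 1" by transfer (simp add: mat_def vec_eq_iff)
  show "dist A B = norm (A - B)" by (simp add: dist_sqmat_def)
  show "sgn A = inverse (norm A) *\<^sub>R A" by (simp add: sgn_sqmat_def)
  show "uniformity = (INF e\<in>{0<..}. principal {(A, B :: 'a sqmat). dist A B < e})"
    by (simp add: uniformity_sqmat_def)
  show "open U \<longleftrightarrow> (\<forall>A\<in>U. \<forall>\<^sub>F (A', B) in uniformity. A' = A \<longrightarrow> B \<in> U)" for U :: "'a sqmat set"
    by (simp add: open_sqmat_def)
  show "norm A = 0 \<longleftrightarrow> A = 0" by transfer (rule row_sum_norm_eq_0_iff)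
  show "norm (A + B) \<le> norm A + norm B" by transfer (rule row_sum_norm_triangle)
  show "norm (r *\<^sub>R A) = \<bar>r\<bar> * norm A" by transfer (rule row_sum_norm_scaleR)
  show "norm (A * B) \<le> norm A * norm B" by transfer (rule row_sum_norm_mult)
  show "norm (1::'a sqmat) = 1" by transfer (rule row_sum_norm_mat_1)
qed

end

lemma bounded_linear_Rep_sqmat: "bounded_linear (Rep_sqmat :: 'n::finite sqmat \<Rightarrow> _)"
proof (rule bounded_linear_intro[where K = "real CARD('n) * real CARD('n)"])
  fix A :: "'n sqmat"
  have "norm (Rep_sqmat A) \<le> (\<Sum>i\<in>UNIV. norm (Rep_sqmat A $ i))"
    unfolding norm_vec_def by (rule L2_set_le_sum) simp
  also have "\<dots> \<le> (\<Sum>i\<in>UNIV. \<Sum>j\<in>(UNIV::'n set). \<bar>Rep_sqmat A $ i $ j\<bar>)"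
    by (intro sum_mono norm_le_l1_cart)
  also have "\<dots> \<le> (\<Sum>i\<in>(UNIV::'n set). \<Sum>j\<in>(UNIV::'n set). norm A)"
    by (intro sum_mono) (transfer, rule abs_entry_le_row_sum_norm)
  finally show "norm (Rep_sqmat A) \<le> norm A * (real CARD('n) * real CARD('n))"
    by (simp add: mult_ac)
qed (transfer, simp)+

lemma bounded_linear_Abs_sqmat: "bounded_linear (Abs_sqmat :: _ \<Rightarrow> 'n::finite sqmat)"
proof (rule bounded_linear_intro[where K = "real CARD('n)"])
  show "norm (Abs_sqmat A :: 'n sqmat) \<le> norm A * real CARD('n)" for A
    using row_sum_norm_le_norm[of A] by (simp add: norm_sqmat.abs_eq eq_onp_def mult.commute)
qed (simp_all add: plus_sqmat.abs_eq scaleR_sqmat.abs_eq eq_onp_def)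

instance sqmat :: (finite) banach
proof
  fix X :: "nat \<Rightarrow> 'a sqmat"
  assume "Cauchy X"
  then have "convergent (\<lambda>n. Rep_sqmat (X n))"
    by (intro Cauchy_convergent bounded_linear.Cauchy[OF bounded_linear_Rep_sqmat])
  then obtain L where "(\<lambda>n. Rep_sqmat (X n)) \<longlonglongrightarrow> L"
    by (auto simp: convergent_def)
  then have "(\<lambda>n. Abs_sqmat (Rep_sqmat (X n))) \<longlonglongrightarrow> Abs_sqmat L"
    by (rule bounded_linear.tendsto[OF bounded_linear_Abs_sqmat])
  then show "convergent X"
    by (auto simp: convergent_def Rep_sqmat_inverse)
qed

section \<open>Transition matrices of a generator\<close>

lemma abs_Rep_sqmat_le_norm: "\<bar>Rep_sqmat A $ i $ j\<bar> \<le> norm A"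
  by transfer (rule abs_entry_le_row_sum_norm)

lemma bounded_linear_sqmat_entry: "bounded_linear (\<lambda>A. Rep_sqmat A $ i $ j)"
  by (intro bounded_linear_compose[OF bounded_linear_vec_nth]
      bounded_linear_compose[OF bounded_linear_vec_nth] bounded_linear_Rep_sqmat)

lemma Rep_sqmat_power: "Rep_sqmat (A ^ k) = mpow (Rep_sqmat A) k"
  by (induction k) (simp_all add: one_sqmat.rep_eq times_sqmat.rep_eq)

lemma mpow_scaleR: "mpow (t *\<^sub>R Q) k = (t ^ k) *\<^sub>R mpow Q k"
  by (induction k) (simp_all add: scalar_matrix_assoc[symmetric] matrix_scalar_ac)

lemma trans_mat_sums_exp: "(\<lambda>k. (t ^ k / fact k) *\<^sub>R mpow Q k) sums Rep_sqmat (exp (t *\<^sub>R Abs_sqmat Q))"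
proof -
  have "(\<lambda>k. Rep_sqmat ((t *\<^sub>R Abs_sqmat Q) ^ k /\<^sub>R fact k)) sums Rep_sqmat (exp (t *\<^sub>R Abs_sqmat Q))"
    by (rule bounded_linear.sums[OF bounded_linear_Rep_sqmat exp_converges])
  moreover have "Rep_sqmat ((t *\<^sub>R Abs_sqmat Q) ^ k /\<^sub>R fact k) = (t ^ k / fact k) *\<^sub>R mpow Q k" for k
    by (simp add: Rep_sqmat_power scaleR_sqmat.rep_eq Abs_sqmat_inverse mpow_scaleR divide_inverse
        mult.commute)
  ultimately show ?thesis by simp
qed

lemma trans_mat_eq_exp: "trans_mat t Q = Rep_sqmat (exp (t *\<^sub>R Abs_sqmat Q))"
  unfolding trans_mat_def using trans_mat_sums_exp by (rule sums_unique[symmetric])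

lemma trans_mat_entry_sums: "(\<lambda>k. t ^ k / fact k * mpow Q k $ i $ j) sums trans_mat t Q $ i $ j"
  using bounded_linear.sums[OF bounded_linear_compose[OF bounded_linear_vec_nth bounded_linear_vec_nth]
      trans_mat_sums_exp]
  by (simp add: trans_mat_eq_exp)

lemma trans_mat_0: "trans_mat 0 Q = mat 1"
  by (simp add: trans_mat_eq_exp one_sqmat.rep_eq)

lemma trans_mat_add: "trans_mat s Q ** trans_mat t Q = trans_mat (s + t) Q"
  by (simp add: trans_mat_eq_exp times_sqmat.rep_eq[symmetric] exp_add_commuting[symmetric]
      scaleR_add_left)

lemma continuous_on_trans_mat_entry: "continuous_on S (\<lambda>t. trans_mat t Q $ i $ j)"
proof -
  have "continuous_on S (\<lambda>t. exp (t *\<^sub>R Abs_sqmat Q))"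
    unfolding continuous_on_eq_continuous_within
    using has_vector_derivative_continuous[OF exp_scaleR_has_vector_derivative_right] by blast
  then show ?thesis
    unfolding trans_mat_eq_exp
    by (rule continuous_on_compose2[OF linear_continuous_on[OF bounded_linear_sqmat_entry]]) auto
qed

lemma trans_mat_entry_has_derivative_0:
  "((\<lambda>t. trans_mat t Q $ i $ j) has_real_derivative Q $ i $ j) (at 0 within S)"
proof -
  have "((\<lambda>t. exp (t *\<^sub>R Abs_sqmat Q)) has_derivative (\<lambda>h. h *\<^sub>R Abs_sqmat Q)) (at 0 within S)"
    using exp_scaleR_has_vector_derivative_right[where t = 0 and A = "Abs_sqmat Q" and T = S]
    by (simp add: has_vector_derivative_def)
  from bounded_linear.has_derivative[OF bounded_linear_sqmat_entry this]
  show ?thesis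
    by (simp add: trans_mat_eq_exp has_field_derivative_def scaleR_sqmat.rep_eq Abs_sqmat_inverse
        mult_commute_abs)
qed

lemma norm_exp_sub_taylor_le:
  fixes x :: "'a::{real_normed_algebra_1,banach}"
  shows "norm (exp x - (\<Sum>n<k. x ^ n /\<^sub>R fact n)) \<le> norm x ^ k * exp (norm x)"
proof -
  have term_le: "norm (x ^ (n + k) /\<^sub>R fact (n + k)) \<le> norm x ^ k * (norm x ^ n / fact n)" for n
  proof -
    have "norm (x ^ (n + k) /\<^sub>R fact (n + k)) = norm (x ^ (n + k)) / fact (n + k)"
      by (simp add: divide_inverse mult.commute)
    also have "\<dots> \<le> norm x ^ (n + k) / fact (n + k)"
      by (intro divide_right_mono norm_power_ineq) simp
    also have "\<dots> \<le> norm x ^ (n + k) / fact n"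
      by (intro divide_left_mono fact_mono) auto
    finally show ?thesis by (simp add: power_add mult_ac)
  qed
  have "(\<lambda>n. norm x ^ n / fact n) sums exp (norm x)"
    using exp_converges[of "norm x"] by (simp add: divide_inverse mult.commute)
  then have bound_sums: "(\<lambda>n. norm x ^ k * (norm x ^ n / fact n)) sums (norm x ^ k * exp (norm x))"
    by (rule sums_mult)
  have norm_summable: "summable (\<lambda>n. norm (x ^ (n + k) /\<^sub>R fact (n + k)))"
    by (rule summable_comparison_test[OF _ sums_summable[OF bound_sums]]) (use term_le in auto)
  have "exp x - (\<Sum>n<k. x ^ n /\<^sub>R fact n) = (\<Sum>n. x ^ (n + k) /\<^sub>R fact (n + k))"
    using exp_first_terms[of x k] by (simp add: scaleR_conv_of_real divide_inverse mult.commute)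
  also have "norm \<dots> \<le> (\<Sum>n. norm (x ^ (n + k) /\<^sub>R fact (n + k)))"
    by (rule summable_norm[OF norm_summable])
  also have "\<dots> \<le> norm x ^ k * exp (norm x)"
    using suminf_le[OF term_le norm_summable sums_summable[OF bound_sums]] sums_unique[OF bound_sums]
    by simp
  finally show ?thesis .
qed

lemma smallo_power2_at_0_of_cubic_bound:
  fixes g :: "real \<Rightarrow> real"
  assumes "\<And>t. \<bar>t\<bar> \<le> 1 \<Longrightarrow> \<bar>g t\<bar> \<le> K * \<bar>t\<bar> ^ 3"
  shows "g \<in> o[at 0](\<lambda>t. t\<^sup>2)"
proof (rule landau_o.big_small_trans)
  have "\<forall>\<^sub>F t in at (0::real). \<bar>t\<bar> < 1"
    unfolding eventually_at by (intro exI[of _ 1]) (auto simp: dist_real_def)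
  then show "g \<in> O[at 0](\<lambda>t. t ^ 3)"
    using assms by (intro bigoI[of _ K]) (auto elim!: eventually_mono simp: power_abs)
  have "\<forall>\<^sub>F t in at (0::real). t \<noteq> 0"
    by (rule eventually_neq_at_within)
  moreover from this have "\<forall>\<^sub>F t in at (0::real). t = t ^ 3 / t\<^sup>2"
    by eventually_elim (simp add: power2_eq_square power3_eq_cube)
  then have "((\<lambda>t::real. t ^ 3 / t\<^sup>2) \<longlongrightarrow> 0) (at 0)"
    by (rule Lim_transform_eventually[OF tendsto_ident_at])
  ultimately show "(\<lambda>t::real. t ^ 3) \<in> o[at 0](\<lambda>t. t\<^sup>2)"
    by (intro smalloI_tendsto) (auto elim: eventually_mono)
qed

lemma trans_mat_entry_taylor2:
  "(\<lambda>t. trans_mat t Q $ i $ j - mat 1 $ i $ j - t * Q $ i $ j - t\<^sup>2 / 2 * (Q ** Q) $ i $ j)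
     \<in> o[at 0](\<lambda>t. t\<^sup>2)"
proof (rule smallo_power2_at_0_of_cubic_bound)
  fix t :: real
  assume "\<bar>t\<bar> \<le> 1"
  define N where "N = norm (Abs_sqmat Q)"
  let ?x = "t *\<^sub>R Abs_sqmat Q"
  have "trans_mat t Q $ i $ j - mat 1 $ i $ j - t * Q $ i $ j - t\<^sup>2 / 2 * (Q ** Q) $ i $ j
      = Rep_sqmat (exp ?x - (\<Sum>n<3. ?x ^ n /\<^sub>R fact n)) $ i $ j"
    by (simp add: trans_mat_eq_exp eval_nat_numeral lessThan_Suc Rep_sqmat_power Abs_sqmat_inverse
        plus_sqmat.rep_eq minus_sqmat.rep_eq times_sqmat.rep_eq scaleR_sqmat.rep_eq one_sqmat.rep_eq
        mpow_scaleR power2_eq_square)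
  also have "\<bar>\<dots>\<bar> \<le> norm ?x ^ 3 * exp (norm ?x)"
    by (rule order_trans[OF abs_Rep_sqmat_le_norm norm_exp_sub_taylor_le])
  also have "\<dots> = (\<bar>t\<bar> ^ 3 * N ^ 3) * exp (\<bar>t\<bar> * N)"
    by (simp add: N_def power_mult_distrib)
  also have "\<dots> \<le> (\<bar>t\<bar> ^ 3 * N ^ 3) * exp N"
    using \<open>\<bar>t\<bar> \<le> 1\<close> by (intro mult_left_mono) (simp_all add: N_def mult_left_le_one_le)
  finally show "\<bar>trans_mat t Q $ i $ j - mat 1 $ i $ j - t * Q $ i $ j - t\<^sup>2 / 2 * (Q ** Q) $ i $ j\<bar>
      \<le> N ^ 3 * exp N * \<bar>t\<bar> ^ 3"
    by (simp add: mult_ac)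
qed

lemma trans_mat_difference_expansion:
  "(\<lambda>e. trans_mat e Qs $ i $ j - trans_mat e Q $ i $ j - e * (Qs $ i $ j - Q $ i $ j)
      - e\<^sup>2 / 2 * ((Qs ** Qs) $ i $ j - (Q ** Q) $ i $ j)) \<in> o[at_right 0](\<lambda>e. e\<^sup>2)"
proof -
  have "at_right (0::real) \<le> at 0"
    by (simp add: at_le)
  then have "(\<lambda>e. (trans_mat e Qs $ i $ j - mat 1 $ i $ j - e * Qs $ i $ j - e\<^sup>2 / 2 * (Qs ** Qs) $ i $ j)
      - (trans_mat e Q $ i $ j - mat 1 $ i $ j - e * Q $ i $ j - e\<^sup>2 / 2 * (Q ** Q) $ i $ j))
      \<in> o[at_right 0](\<lambda>e. e\<^sup>2)"
    by (intro sum_in_smallo landau_o.small.filter_mono[OF _ trans_mat_entry_taylor2])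
  then show ?thesis
    by (simp add: algebra_simps)
qed

definition is_generator :: "real^'n::finite^'n \<Rightarrow> bool" where
  "is_generator Q \<longleftrightarrow> (\<forall>i. Q $ i \<in> E_set i)"

lemma generator_row_sum: "is_generator Q \<Longrightarrow> (\<Sum>j\<in>UNIV. Q $ i $ j) = 0"
  unfolding is_generator_def E_set_def by (simp add: sum.remove[of UNIV i])

lemma generator_off_diagonal_nonneg: "is_generator Q \<Longrightarrow> j \<noteq> i \<Longrightarrow> 0 \<le> Q $ i $ j"
  by (simp add: is_generator_def E_set_def)

lemma mpow_row_sum:
  assumes "is_generator Q"
  shows "(\<Sum>j\<in>UNIV. mpow Q n $ i $ j) = (if n = 0 then 1 else 0)"
proof (induction n arbitrary: i)
  case 0
  show ?case by (simp add: mat_def if_distrib cong: if_cong)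
next
  case (Suc n)
  have "(\<Sum>j\<in>UNIV. mpow Q (Suc n) $ i $ j) = (\<Sum>j\<in>UNIV. \<Sum>l\<in>UNIV. Q $ i $ l * mpow Q n $ l $ j)"
    by (simp add: matrix_matrix_mult_def)
  also have "\<dots> = (\<Sum>l\<in>UNIV. Q $ i $ l * (\<Sum>j\<in>UNIV. mpow Q n $ l $ j))"
    by (subst sum.swap) (simp add: sum_distrib_left)
  also have "\<dots> = 0"
    using generator_row_sum[OF assms] by (simp add: Suc sum_distrib_right[symmetric])
  finally show ?case by simp
qed

lemma trans_mat_row_sum: "is_generator Q \<Longrightarrow> (\<Sum>j\<in>UNIV. trans_mat t Q $ i $ j) = 1"
proof -
  assume Q: "is_generator Q"
  have "(\<lambda>k. \<Sum>j\<in>UNIV. t ^ k / fact k * mpow Q k $ i $ j) sums (\<Sum>j\<in>UNIV. trans_mat t Q $ i $ j)"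
    by (intro sums_sum trans_mat_entry_sums)
  moreover have "(\<Sum>j\<in>UNIV. t ^ k / fact k * mpow Q k $ i $ j) = (if k = 0 then 1 else 0)" for k
    by (simp only: sum_distrib_left[symmetric] mpow_row_sum[OF Q]) simp
  ultimately show ?thesis
    using sums_single[of 0 "\<lambda>_. 1::real"] by (simp add: sums_unique2)
qed

lemma trans_mat_nonneg_of_nonneg:
  assumes "\<And>i j. 0 \<le> B $ i $ j" and "0 \<le> t"
  shows "0 \<le> trans_mat t B $ i $ j"
proof -
  have "0 \<le> mpow B k $ i $ j" for k i j
    by (induction k arbitrary: i j) (simp_all add: mat_def matrix_matrix_mult_def assms sum_nonneg)
  then show ?thesis
    using assms(2) by (intro sums_le[OF _ sums_zero trans_mat_entry_sums]) simp
qed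

lemma trans_mat_shift: "trans_mat t (Q + mat c) = exp (t * c) *\<^sub>R trans_mat t Q"
proof -
  have "Abs_sqmat (Q + mat c) = Abs_sqmat Q + of_real c"
    by (simp add: Rep_sqmat_inject[symmetric] Abs_sqmat_inverse plus_sqmat.rep_eq of_real_def
        scaleR_sqmat.rep_eq one_sqmat.rep_eq vec_eq_iff mat_def)
  then have shifted: "t *\<^sub>R Abs_sqmat (Q + mat c) = t *\<^sub>R Abs_sqmat Q + of_real (t * c)"
    by (simp add: scaleR_add_right scaleR_conv_of_real distrib_left)
  have commute: "t *\<^sub>R Abs_sqmat Q * of_real (t * c) = of_real (t * c) * t *\<^sub>R Abs_sqmat Q"
    by (simp add: of_real_def)
  have "exp (t *\<^sub>R Abs_sqmat (Q + mat c)) = exp (t *\<^sub>R Abs_sqmat Q) * exp (of_real (t * c))"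
    unfolding shifted exp_add_commuting[OF commute] ..
  also have "\<dots> = exp (t * c) *\<^sub>R exp (t *\<^sub>R Abs_sqmat Q)"
    unfolding exp_of_real by (simp only: of_real_def mult_scaleR_right mult_1_right)
  finally show ?thesis
    by (simp add: trans_mat_eq_exp scaleR_sqmat.rep_eq)
qed

lemma trans_mat_nonneg:
  assumes Q: "is_generator Q" and t: "0 \<le> t"
  shows "0 \<le> trans_mat t Q $ i $ j"
proof -
  define c where "c = (\<Sum>k\<in>UNIV. \<bar>Q $ k $ k\<bar>)"
  have "0 \<le> (Q + mat c) $ k $ l" for k l
  proof (cases "k = l")
    case True
    have "\<bar>Q $ k $ k\<bar> \<le> c"
      unfolding c_def by (rule member_le_sum) auto
    then show ?thesis using True by (simp add: mat_def)
  qed (simp add: mat_def generator_off_diagonal_nonneg[OF Q])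
  then have "0 \<le> trans_mat t (Q + mat c) $ i $ j"
    using t by (rule trans_mat_nonneg_of_nonneg)
  then show ?thesis
    by (simp add: trans_mat_shift zero_le_mult_iff)
qed

lemma abs_trans_mat_le_1:
  assumes "is_generator Q" and "0 \<le> t"
  shows "\<bar>trans_mat t Q $ i $ j\<bar> \<le> 1"
proof -
  have "trans_mat t Q $ i $ j \<le> (\<Sum>j\<in>UNIV. trans_mat t Q $ i $ j)"
    by (rule member_le_sum) (auto intro: trans_mat_nonneg[OF assms])
  then show ?thesis
    using trans_mat_nonneg[OF assms] trans_mat_row_sum[OF assms(1)] by simp
qed

section \<open>Integrals and second-order expansions at \<open>0\<^sup>+\<close>\<close>

lemma set_integrable_sum:
  fixes f :: "'i \<Rightarrow> 'a \<Rightarrow> 'b::{banach, second_countable_topology}"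
  assumes "\<And>k. k \<in> I \<Longrightarrow> set_integrable M A (f k)"
  shows "set_integrable M A (\<lambda>x. \<Sum>k\<in>I. f k x)"
  using assms by (simp add: set_integrable_def scaleR_sum_right)

lemma set_integral_sum:
  fixes f :: "'i \<Rightarrow> 'a \<Rightarrow> 'b::{banach, second_countable_topology}"
  assumes "\<And>k. k \<in> I \<Longrightarrow> set_integrable M A (f k)"
  shows "(LINT x:A|M. (\<Sum>k\<in>I. f k x)) = (\<Sum>k\<in>I. LINT x:A|M. f k x)"
  using assms by (simp add: set_integrable_def set_lebesgue_integral_def scaleR_sum_right integral_sum)

lemma set_integral_shift:
  fixes \<phi> :: "real \<Rightarrow> real"
  assumes "set_integrable lborel {e<..} \<phi>"
  shows "set_integrable lborel {0..} (\<lambda>s. \<phi> (s + e))"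
    and "(LINT t:{e<..}|lborel. \<phi> t) = (LINT s:{0..}|lborel. \<phi> (s + e))"
proof -
  define F where "F x = indicator {e<..} x * \<phi> x" for x
  have F: "integrable lborel F"
    using assms unfolding F_def[abs_def] set_integrable_def by simp
  then have F_shift: "integrable lborel (\<lambda>x. F (e + 1 * x))"
    by (subst lborel_integrable_real_affine_iff) auto
  have point: "integrable lborel (\<lambda>x. indicator {0::real} x * \<phi> e)"
    by (simp add: integrable_indicator_iff)
  have split: "indicator {0..} x * \<phi> (x + e) = F (e + 1 * x) + indicator {0::real} x * \<phi> e" for x
    by (cases "x = 0") (auto simp: F_def indicator_def add.commute)
  show "set_integrable lborel {0..} (\<lambda>s. \<phi> (s + e))"
    unfolding set_integrable_def using F_shift point by (simp add: split)
  have "(LINT s:{0..}|lborel. \<phi> (s + e)) = integral\<^sup>L lborel (\<lambda>x. F (e + 1 * x))"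
    unfolding set_lebesgue_integral_def using F_shift point by (simp add: split)
  also have "\<dots> = (LINT t:{e<..}|lborel. \<phi> t)"
    using lborel_integral_real_affine[of 1 F e] by (simp add: F_def set_lebesgue_integral_def)
  finally show "(LINT t:{e<..}|lborel. \<phi> t) = (LINT s:{0..}|lborel. \<phi> (s + e))" ..
qed

lemma integral_dominated_convergence_at_right:
  fixes s :: "real \<Rightarrow> 'a \<Rightarrow> real" and w :: "'a \<Rightarrow> real"
  assumes "a < b"
    and "\<And>e. e \<in> {a<..<b} \<Longrightarrow> s e \<in> borel_measurable M" and "f \<in> borel_measurable M"
    and "integrable M w"
    and "\<And>x. ((\<lambda>e. s e x) \<longlongrightarrow> f x) (at_right a)"
    and "\<And>e x. e \<in> {a<..<b} \<Longrightarrow> norm (s e x) \<le> w x"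
  shows "((\<lambda>e. integral\<^sup>L M (s e)) \<longlongrightarrow> integral\<^sup>L M f) (at_right a)"
proof (rule tendsto_at_right_sequentially[OF \<open>a < b\<close>])
  fix S :: "nat \<Rightarrow> real"
  assume S: "\<And>n. a < S n" "\<And>n. S n < b" "S \<longlonglongrightarrow> a"
  have "filterlim S (at_right a) sequentially"
    using S by (auto intro: tendsto_imp_filterlim_at_right)
  then have "(\<lambda>n. s (S n) x) \<longlonglongrightarrow> f x" for x
    by (rule filterlim_compose[OF assms(5)])
  then show "(\<lambda>n. integral\<^sup>L M (s (S n))) \<longlonglongrightarrow> integral\<^sup>L M f"
    using S assms by (intro integral_dominated_convergence[where w = w]) auto
qed

lemma tendsto_right_difference_quotient:
  assumes "(g has_real_derivative D) (at x within {x..})"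
  shows "((\<lambda>h. (g (x + h) - g x) / h) \<longlongrightarrow> D) (at_right 0)"
proof -
  have "((\<lambda>y. (g y - g x) / (y - x)) \<longlongrightarrow> D) (at x within {x..})"
    using assms by (simp add: has_field_derivative_iff)
  moreover have "filterlim (\<lambda>h. x + h) (at x within {x..}) (at_right 0)"
  proof (subst filterlim_at, rule conjI)
    show "\<forall>\<^sub>F h in at_right 0. x + h \<in> {x..} \<and> x + h \<noteq> x"
      using eventually_at_right_less[of 0] by eventually_elim simp
    have "((\<lambda>h. x + h) \<longlongrightarrow> x + 0) (at_right 0)"
      by (intro tendsto_intros)
    then show "((\<lambda>h. x + h) \<longlongrightarrow> x) (at_right 0)"
      by simp
  qed
  ultimately show ?thesis
    using filterlim_compose by fastforce
qed

lemma set_integral_affine_atLeastAtMost: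
  fixes a b e :: real
  assumes "0 \<le> e"
  shows "(LINT t:{0..e}|lborel. a + t * b) = e * a + e\<^sup>2 / 2 * b"
proof -
  have "(LINT t:{0..e}|lborel. t) = e\<^sup>2 / 2"
    using assms integral_power[of 0 e 1] by (simp add: set_lebesgue_integral_def mult.commute power2_eq_square)
  moreover have "(LINT t:{0..e}|lborel. a) = e * a"
    using assms by (subst set_integral_const) auto
  moreover have "(LINT t:{0..e}|lborel. a + t * b)
      = (LINT t:{0..e}|lborel. a) + (LINT t:{0..e}|lborel. t) * b"
    by (simp add: set_integral_add set_integrable_mult_left borel_integrable_atLeastAtMost')
  ultimately show ?thesis
    by (simp add: mult.commute)
qed

lemma abs_set_integral_atLeastAtMost_le:
  fixes h :: "real \<Rightarrow> real"
  assumes "set_integrable lborel {0..e} h" and "0 \<le> e" and "\<And>t. t \<in> {0..e} \<Longrightarrow> \<bar>h t\<bar> \<le> C"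
  shows "\<bar>LINT t:{0..e}|lborel. h t\<bar> \<le> C * e"
proof -
  have "\<bar>LINT t:{0..e}|lborel. h t\<bar> \<le> (LINT t:{0..e}|lborel. \<bar>h t\<bar>)"
    using set_integral_norm_bound[OF assms(1)] by simp
  also have "\<dots> \<le> (LINT t:{0..e}|lborel. C)"
  proof (rule set_integral_mono)
    show "set_integrable lborel {0..e} (\<lambda>t. \<bar>h t\<bar>)"
      using assms(1) by (rule set_integrable_abs)
    show "set_integrable lborel {0..e} (\<lambda>t. C)"
      by (intro borel_integrable_atLeastAtMost' continuous_intros)
  qed (use assms(3) in auto)
  also have "\<dots> = C * e"
    using assms(2) by (subst set_integral_const) auto
  finally show ?thesis .
qed

lemma set_integral_taylor2_at_right:
  fixes g :: "real \<Rightarrow> real"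
  assumes deriv: "(g has_real_derivative g') (at 0 within {0..})"
    and int: "\<And>e. 0 < e \<Longrightarrow> set_integrable lborel {0..e} g"
  shows "(\<lambda>e. (LINT t:{0..e}|lborel. g t) - e * g 0 - e\<^sup>2 / 2 * g') \<in> o[at_right 0](\<lambda>e. e\<^sup>2)"
proof (rule landau_o.smallI)
  fix c :: real
  assume "0 < c"
  have "((\<lambda>y. (g y - g 0) / (y - 0)) \<longlongrightarrow> g') (at 0 within {0..})"
    using deriv by (simp add: has_field_derivative_iff)
  from tendstoD[OF this \<open>0 < c\<close>] obtain \<delta> where "0 < \<delta>"
    and near: "\<And>y. y \<in> {0..} \<Longrightarrow> y \<noteq> 0 \<Longrightarrow> dist y 0 < \<delta> \<Longrightarrow> \<bar>(g y - g 0) / y - g'\<bar> < c"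
    by (auto simp: eventually_at dist_real_def)
  have linear_approx: "\<bar>g t - (g 0 + t * g')\<bar> \<le> c * t" if "0 \<le> t" "t < \<delta>" for t
  proof (cases "t = 0")
    case False
    then have "\<bar>((g t - g 0) / t - g') * t\<bar> \<le> c * t"
      using near[of t] that by (simp add: abs_mult dist_real_def)
    moreover have "((g t - g 0) / t - g') * t = g t - (g 0 + t * g')"
      using False by (simp add: field_simps)
    ultimately show ?thesis
      by simp
  qed simp
  have "\<forall>\<^sub>F e in at_right 0. 0 < e \<and> e < \<delta>"
    using \<open>0 < \<delta>\<close> by (auto simp: eventually_at_right_field)
  then show "\<forall>\<^sub>F e in at_right 0. norm ((LINT t:{0..e}|lborel. g t) - e * g 0 - e\<^sup>2 / 2 * g')
      \<le> c * norm (e\<^sup>2)"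
  proof eventually_elim
    case (elim e)
    have linear_int: "set_integrable lborel {0..e} (\<lambda>t. g 0 + t * g')"
      by (intro borel_integrable_atLeastAtMost' continuous_intros)
    have "(LINT t:{0..e}|lborel. g t) - e * g 0 - e\<^sup>2 / 2 * g'
        = (LINT t:{0..e}|lborel. g t - (g 0 + t * g'))"
      using set_integral_diff(2)[OF int linear_int] set_integral_affine_atLeastAtMost[of e] elim by simp
    also have "\<bar>\<dots>\<bar> \<le> c * e * e"
    proof (intro abs_set_integral_atLeastAtMost_le set_integral_diff(1) int linear_int)
      fix t
      assume "t \<in> {0..e}"
      then show "\<bar>g t - (g 0 + t * g')\<bar> \<le> c * e"
        using linear_approx[of t] elim \<open>0 < c\<close> by (auto intro: order_trans mult_left_mono)
    qed (use elim in auto)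
    finally show ?case
      by (simp add: power2_eq_square)
  qed
qed

lemma eventually_at_right_0_square_neq_0: "\<forall>\<^sub>F e in at_right (0::real). e\<^sup>2 \<noteq> 0"
  using eventually_at_right_less[of "0::real"] by eventually_elim simp

lemma smallo_product_expansion:
  fixes p h :: "real \<Rightarrow> real"
  assumes p: "(\<lambda>e. p e - e * a - e\<^sup>2 / 2 * b) \<in> o[at_right 0](\<lambda>e. e\<^sup>2)"
    and h: "(\<lambda>e. h e - c - e * d) \<in> o[at_right 0](\<lambda>e. e)"
  shows "(\<lambda>e. p e * h e - e * a * c - e\<^sup>2 * (a * d + b * c / 2)) \<in> o[at_right 0](\<lambda>e. e\<^sup>2)"
proof (rule smalloI_tendsto[OF _ eventually_at_right_0_square_neq_0])
  define X where "X e = (p e - e * a - e\<^sup>2 / 2 * b) / e\<^sup>2" for e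
  define Y where "Y e = (h e - c - e * d) / e" for e
  have X: "(X \<longlongrightarrow> 0) (at_right 0)"
    unfolding X_def by (rule smalloD_tendsto[OF p])
  have Y: "(Y \<longlongrightarrow> 0) (at_right 0)"
    unfolding Y_def by (rule smalloD_tendsto[OF h])
  have "((\<lambda>e. e * b * d / 2 + X e * (c + e * d) + (e * X e + a + e * b / 2) * Y e) \<longlongrightarrow>
      0 * b * d / 2 + 0 * (c + 0 * d) + (0 * 0 + a + 0 * b / 2) * 0) (at_right 0)"
    by (intro tendsto_intros X Y) simp_all
  then have "((\<lambda>e. e * b * d / 2 + X e * (c + e * d) + (e * X e + a + e * b / 2) * Y e) \<longlongrightarrow> 0)
      (at_right 0)"
    by simp
  moreover have "\<forall>\<^sub>F e in at_right 0. e * b * d / 2 + X e * (c + e * d) + (e * X e + a + e * b / 2) * Y e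
      = (p e * h e - e * a * c - e\<^sup>2 * (a * d + b * c / 2)) / e\<^sup>2"
    using eventually_at_right_less[of "0::real"]
    by eventually_elim (simp add: X_def Y_def field_simps power2_eq_square)
  ultimately show "((\<lambda>e. (p e * h e - e * a * c - e\<^sup>2 * (a * d + b * c / 2)) / e\<^sup>2) \<longlongrightarrow> 0) (at_right 0)"
    by (rule Lim_transform_eventually)
qed

lemma second_order_expansion_tendsto:
  fixes d :: "real \<Rightarrow> real"
  assumes "(\<lambda>e. d e - e * A - e\<^sup>2 / 2 * B) \<in> o[at_right 0](\<lambda>e. e\<^sup>2)"
  shows "((\<lambda>e. d e / e) \<longlongrightarrow> A) (at_right 0)"
    and "((\<lambda>e. (d e - e * A) / e\<^sup>2) \<longlongrightarrow> B / 2) (at_right 0)"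
proof -
  define X where "X e = (d e - e * A - e\<^sup>2 / 2 * B) / e\<^sup>2" for e
  have X: "(X \<longlongrightarrow> 0) (at_right 0)"
    unfolding X_def by (rule smalloD_tendsto[OF assms])
  have "((\<lambda>e. A + e * (B / 2 + X e)) \<longlongrightarrow> A + 0 * (B / 2 + 0)) (at_right 0)"
    by (intro tendsto_intros X) simp
  moreover have "\<forall>\<^sub>F e in at_right 0. A + e * (B / 2 + X e) = d e / e"
    using eventually_at_right_less[of "0::real"]
    by eventually_elim (simp add: X_def field_simps power2_eq_square)
  ultimately show "((\<lambda>e. d e / e) \<longlongrightarrow> A) (at_right 0)"
    by (simp add: Lim_transform_eventually)
  have "((\<lambda>e. B / 2 + X e) \<longlongrightarrow> B / 2 + 0) (at_right 0)"
    by (intro tendsto_intros X) simp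
  moreover have "\<forall>\<^sub>F e in at_right 0. B / 2 + X e = (d e - e * A) / e\<^sup>2"
    using eventually_at_right_less[of "0::real"]
    by eventually_elim (simp add: X_def field_simps power2_eq_square)
  ultimately show "((\<lambda>e. (d e - e * A) / e\<^sup>2) \<longlongrightarrow> B / 2) (at_right 0)"
    by (simp add: Lim_transform_eventually)
qed

lemma eventually_pos_of_second_order_expansion:
  fixes d :: "real \<Rightarrow> real"
  assumes "(\<lambda>e. d e - e * A - e\<^sup>2 / 2 * B) \<in> o[at_right 0](\<lambda>e. e\<^sup>2)"
    and "0 \<le> A" and "A = 0 \<Longrightarrow> 0 < B"
  shows "\<forall>\<^sub>F e in at_right 0. 0 < d e"
proof (cases "A = 0")
  case True
  have "\<forall>\<^sub>F e in at_right 0. 0 < (d e - e * A) / e\<^sup>2"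
    using assms(3)[OF True] by (intro order_tendstoD(1)[OF second_order_expansion_tendsto(2)[OF assms(1)]])
      simp
  then show ?thesis
    by eventually_elim (simp add: True zero_less_divide_iff)
next
  case False
  have "\<forall>\<^sub>F e in at_right 0. 0 < d e / e"
    using assms(2) False by (intro order_tendstoD(1)[OF second_order_expansion_tendsto(1)[OF assms(1)]])
      simp
  with eventually_at_right_less[of "0::real"] show ?thesis
    by eventually_elim (simp add: zero_less_divide_iff)
qed

lemma eventually_neg_of_second_order_expansion:
  fixes d :: "real \<Rightarrow> real"
  assumes "(\<lambda>e. d e - e * A - e\<^sup>2 / 2 * B) \<in> o[at_right 0](\<lambda>e. e\<^sup>2)"
    and "A = 0" and "B < 0"
  shows "\<forall>\<^sub>F e in at_right 0. d e < 0"
proof -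
  have "\<forall>\<^sub>F e in at_right 0. (d e - e * A) / e\<^sup>2 < 0"
    using assms(3) by (intro order_tendstoD(2)[OF second_order_expansion_tendsto(2)[OF assms(1)]]) simp
  then show ?thesis
    by eventually_elim (simp add: assms(2) divide_less_0_iff)
qed

section \<open>The payoff model\<close>

lemma set_integrable_of_cond_I:
  fixes D :: "'n::finite \<Rightarrow> (real^'n) set" and g :: "real \<Rightarrow> 'n \<Rightarrow> real^'n \<Rightarrow> real"
  assumes I: "cond_I D g" and q: "q \<in> D k" and cont: "continuous_on {0..} (\<lambda>t. g t k q)"
  shows "set_integrable lborel {0..} (\<lambda>t. g t k q)"
proof -
  define c where "c = norm q + 1"
  define h where "h t = (SUP iq\<in>{(i, q). q \<in> D i \<and> norm q \<le> c}. ennreal \<bar>g t (fst iq) (snd iq)\<bar>)" for t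
  have "0 < c"
    unfolding c_def by (simp add: add_nonneg_pos)
  with I have h_finite: "(\<integral>\<^sup>+ t. h t * indicator {0..} t \<partial>lborel) < \<infinity>"
    unfolding cond_I_def h_def Let_def by blast
  have g_le_h: "ennreal \<bar>g t k q\<bar> \<le> h t" for t
    unfolding h_def by (rule SUP_upper2[of "(k, q)"]) (auto simp: c_def q)
  show ?thesis
    unfolding set_integrable_def
  proof (rule integrableI_bounded)
    show "(\<lambda>t. indicat_real {0..} t *\<^sub>R g t k q) \<in> borel_measurable lborel"
      using borel_measurable_continuous_on_indicator[OF _ cont] by simp
    have "(\<integral>\<^sup>+ t. ennreal (norm (indicat_real {0..} t *\<^sub>R g t k q)) \<partial>lborel)
        \<le> (\<integral>\<^sup>+ t. h t * indicator {0..} t \<partial>lborel)"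
      using g_le_h by (intro nn_integral_mono) (simp add: indicator_def)
    then show "(\<integral>\<^sup>+ t. ennreal (norm (indicat_real {0..} t *\<^sub>R g t k q)) \<partial>lborel) < \<infinity>"
      using h_finite by (rule le_less_trans)
  qed
qed

lemma set_integrable_mult_abs_le_1:
  fixes w g :: "real \<Rightarrow> real"
  assumes "set_integrable lborel A g" and "A \<in> sets borel"
    and "continuous_on A w" and "continuous_on A g" and "\<And>t. t \<in> A \<Longrightarrow> \<bar>w t\<bar> \<le> 1"
  shows "set_integrable lborel A (\<lambda>t. w t * g t)"
proof (rule set_integrable_bound[OF assms(1)])
  show "set_borel_measurable lborel A (\<lambda>t. w t * g t)"
    using set_measurable_continuous_on[OF assms(2) continuous_on_mult[OF assms(3,4)]]
    by (simp add: set_borel_measurable_def)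
  show "AE t in lborel. t \<in> A \<longrightarrow> norm (w t * g t) \<le> norm (g t)"
    using assms(5) by (auto simp: abs_mult intro!: AE_I2 mult_left_le_one_le)
qed

definition expected_reward
    :: "(real \<Rightarrow> 'n::finite \<Rightarrow> real^'n \<Rightarrow> real) \<Rightarrow> real^'n^'n \<Rightarrow> 'n \<Rightarrow> real \<Rightarrow> real" where
  "expected_reward g Q i t = (\<Sum>k\<in>UNIV. trans_mat t Q $ i $ k * g t k (Q $ k))"

text \<open>The function \<open>H\<^sub>j(e)\<close> of the proof idea: the payoff collected after time \<open>e\<close> by the
  chain that is in state \<open>j\<close> at time \<open>e\<close>.\<close>

definition continuation_payoff
    :: "(real \<Rightarrow> 'n::finite \<Rightarrow> real^'n \<Rightarrow> real) \<Rightarrow> real^'n^'n \<Rightarrow> real \<Rightarrow> 'n \<Rightarrow> real" where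
  "continuation_payoff g Q e j =
     (LINT t:{e<..}|lborel. (\<Sum>k\<in>UNIV. trans_mat (t - e) Q $ j $ k * g t k (Q $ k)))"

lemma payoff_eq_expected_reward: "payoff g Q i = (LINT t:{0..}|lborel. expected_reward g Q i t)"
  by (simp add: payoff_def expected_reward_def)

locale regular_payoff =
  fixes D :: "'n::finite \<Rightarrow> (real^'n) set" and f ft :: "real \<Rightarrow> 'n \<Rightarrow> real^'n \<Rightarrow> real"
  assumes D_sub: "\<And>i. D i \<subseteq> E_set i"
    and I_f: "cond_I D f"
    and C1: "\<And>i q. q \<in> D i \<Longrightarrow>
               (\<forall>t\<ge>0. ((\<lambda>s. f s i q) has_real_derivative ft t i q) (at t within {0..}))
               \<and> continuous_on {0..} (\<lambda>t. ft t i q)"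
    and I_ft: "cond_I D ft"
    and R: "cond_R D f ft"
begin

lemma gens_is_generator: "Q \<in> gens D \<Longrightarrow> is_generator Q"
  using D_sub by (auto simp: gens_def is_generator_def)

lemma gens_row: "Q \<in> gens D \<Longrightarrow> Q $ k \<in> D k"
  by (simp add: gens_def)

lemma continuous_on_reward:
  assumes "q \<in> D k" and "g \<in> {f, ft}"
  shows "continuous_on {0..} (\<lambda>t. g t k q)"
proof -
  have "continuous_on {0..} (\<lambda>t. f t k q)"
    by (rule DERIV_continuous_on[where D = "\<lambda>t. ft t k q"]) (use C1[OF assms(1)] in auto)
  then show ?thesis
    using assms(2) C1[OF assms(1)] by auto
qed

lemma set_integrable_reward:
  assumes "q \<in> D k" and "g \<in> {f, ft}"
  shows "set_integrable lborel {0..} (\<lambda>t. g t k q)"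
  using assms I_f I_ft by (auto intro: set_integrable_of_cond_I continuous_on_reward)

lemma set_integrable_expected_reward:
  assumes Q: "Q \<in> gens D" and g: "g \<in> {f, ft}" and S: "S \<in> sets borel" "S \<subseteq> {0..}"
  shows "set_integrable lborel S (expected_reward g Q i)"
  unfolding expected_reward_def
proof (intro set_integrable_sum set_integrable_mult_abs_le_1 S continuous_on_trans_mat_entry)
  fix k
  show "set_integrable lborel S (\<lambda>t. g t k (Q $ k))"
    by (rule set_integrable_subset[OF set_integrable_reward[OF gens_row[OF Q] g]]) (use S in simp_all)
  show "continuous_on S (\<lambda>t. g t k (Q $ k))"
    by (rule continuous_on_subset[OF continuous_on_reward[OF gens_row[OF Q] g] S(2)])
  show "\<bar>trans_mat t Q $ i $ k\<bar> \<le> 1" if "t \<in> S" for t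
    using that S(2) by (intro abs_trans_mat_le_1 gens_is_generator Q) auto
qed

lemma set_integrable_continuation_integrand:
  assumes Q: "Q \<in> gens D" and g: "g \<in> {f, ft}" and "0 \<le> e"
  shows "set_integrable lborel {e<..} (\<lambda>t. \<Sum>k\<in>UNIV. trans_mat (t - e) Q $ j $ k * g t k (Q $ k))"
proof (intro set_integrable_sum set_integrable_mult_abs_le_1)
  fix k
  have S: "{e<..} \<subseteq> {0..}"
    using \<open>0 \<le> e\<close> by auto
  show "set_integrable lborel {e<..} (\<lambda>t. g t k (Q $ k))"
    by (rule set_integrable_subset[OF set_integrable_reward[OF gens_row[OF Q] g] _ S]) simp
  show "continuous_on {e<..} (\<lambda>t. g t k (Q $ k))"
    by (rule continuous_on_subset[OF continuous_on_reward[OF gens_row[OF Q] g] S])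
  show "continuous_on {e<..} (\<lambda>t. trans_mat (t - e) Q $ j $ k)"
    by (rule continuous_on_compose2[OF continuous_on_trans_mat_entry[where S = UNIV]])
      (auto intro: continuous_intros)
  show "\<bar>trans_mat (t - e) Q $ j $ k\<bar> \<le> 1" if "t \<in> {e<..}" for t
    using that by (intro abs_trans_mat_le_1 gens_is_generator Q) auto
qed simp

lemma payoff_sw_eq:
  assumes Q: "Q \<in> gens D" and Qs: "Qs \<in> gens D" and "0 \<le> e"
  shows "payoff_sw f e Q Qs i
    = (LINT t:{0..e}|lborel. expected_reward f Q i t)
      + (\<Sum>j\<in>UNIV. trans_mat e Q $ i $ j * continuation_payoff f Qs e j)"
proof -
  have "(\<Sum>k\<in>UNIV. (trans_mat e Q ** trans_mat (t - e) Qs) $ i $ k * f t k (Qs $ k))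
      = (\<Sum>j\<in>UNIV. trans_mat e Q $ i $ j * (\<Sum>k\<in>UNIV. trans_mat (t - e) Qs $ j $ k * f t k (Qs $ k)))" for t
    by (simp add: matrix_matrix_mult_def sum_distrib_left sum_distrib_right mult.assoc)
      (rule sum.swap)
  then have "(LINT t:{e<..}|lborel. (\<Sum>k\<in>UNIV. (trans_mat e Q ** trans_mat (t - e) Qs) $ i $ k * f t k (Qs $ k)))
      = (\<Sum>j\<in>UNIV. trans_mat e Q $ i $ j * continuation_payoff f Qs e j)"
    using set_integrable_continuation_integrand[OF Qs _ \<open>0 \<le> e\<close>]
    by (simp add: set_integral_sum continuation_payoff_def)
  then show ?thesis
    by (simp add: payoff_sw_def expected_reward_def)
qed

lemma payoff_sw_self:
  assumes Qs: "Qs \<in> gens D" and "0 \<le> e"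
  shows "payoff_sw f e Qs Qs i = payoff f Qs i"
proof -
  have split: "{0..} = {0..e} \<union> {e<..}"
    using \<open>0 \<le> e\<close> by auto
  have "payoff f Qs i
      = (LINT t:{0..e}|lborel. expected_reward f Qs i t) + (LINT t:{e<..}|lborel. expected_reward f Qs i t)"
    unfolding payoff_eq_expected_reward split
    using \<open>0 \<le> e\<close> by (intro set_integral_Un set_integrable_expected_reward[OF Qs]) auto
  then show ?thesis
    by (simp add: payoff_sw_def expected_reward_def trans_mat_add)
qed

end

text \<open>As \<open>r(t,e)/e\<close> is nondecreasing in \<open>e\<close>, the integrable function \<open>r(t,e\<^sub>0)/e\<^sub>0\<close>
  dominates all difference quotients with \<open>e \<le> e\<^sub>0\<close>.\<close>

lemma cond_R_difference_quotient_bound: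
  fixes D :: "'n::finite \<Rightarrow> (real^'n) set" and f ft :: "real \<Rightarrow> 'n \<Rightarrow> real^'n \<Rightarrow> real"
  assumes "cond_R D f ft" and Q: "Q \<in> gens D"
  obtains e0 w where "0 < e0" and "set_integrable lborel {0..} w"
    and "\<And>e t k. 0 < e \<Longrightarrow> e \<le> e0 \<Longrightarrow> 0 \<le> t \<Longrightarrow>
           \<bar>(f (t + e) k (Q $ k) - f t k (Q $ k)) / e - ft t k (Q $ k)\<bar> \<le> w t"
proof -
  from assms(1) obtain r :: "real \<Rightarrow> real \<Rightarrow> 'n \<Rightarrow> real^'n \<Rightarrow> real" where
    r_bound: "\<forall>t\<ge>0. \<forall>\<epsilon>>0. \<forall>i. \<forall>q\<in>D i. \<bar>f (t + \<epsilon>) i q - f t i q - \<epsilon> * ft t i q\<bar> \<le> r t \<epsilon> i q"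
    and r_int: "\<forall>i. \<forall>q\<in>D i. \<exists>\<epsilon>0>0. \<forall>\<epsilon>\<in>{0<..\<epsilon>0}. set_integrable lborel {0..} (\<lambda>t. r t \<epsilon> i q)"
    and r_mono: "\<forall>t\<ge>0. \<forall>i. \<forall>q\<in>D i. mono_on {0<..} (\<lambda>\<epsilon>. r t \<epsilon> i q / \<epsilon>)"
    unfolding cond_R_def by (elim exE conjE) (rule that, assumption+)
  have Qk: "Q $ k \<in> D k" for k
    using Q by (simp add: gens_def)
  have "\<forall>k. \<exists>e0>0. \<forall>e\<in>{0<..e0}. set_integrable lborel {0..} (\<lambda>t. r t e k (Q $ k))"
    using r_int Qk by blast
  then obtain e0k where e0k: "\<And>k. 0 < e0k k"
    and e0k_int: "\<And>k e. e \<in> {0<..e0k k} \<Longrightarrow> set_integrable lborel {0..} (\<lambda>t. r t e k (Q $ k))"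
    by (metis (no_types) choice greaterThanAtMost_iff)
  define e0 where "e0 = Min (range e0k)"
  have "0 < e0"
    unfolding e0_def using e0k by (subst Min_gr_iff) auto
  have "e0 \<le> e0k k" for k
    unfolding e0_def by (rule Min_le) auto
  define w where "w t = (\<Sum>k\<in>UNIV. r t e0 k (Q $ k) / e0)" for t
  show ?thesis
  proof
    show "0 < e0" by fact
    show "set_integrable lborel {0..} w"
      unfolding w_def using e0k_int \<open>0 < e0\<close> \<open>\<And>k. e0 \<le> e0k k\<close>
      by (intro set_integrable_sum set_integrable_divide) auto
    fix e t :: real and k :: 'n
    assume e: "0 < e" "e \<le> e0" and t: "0 \<le> t"
    have "\<bar>(f (t + e) k (Q $ k) - f t k (Q $ k)) / e - ft t k (Q $ k)\<bar>
        = \<bar>f (t + e) k (Q $ k) - f t k (Q $ k) - e * ft t k (Q $ k)\<bar> / e"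
      using e by (simp add: field_simps abs_divide)
    also have "\<dots> \<le> r t e k (Q $ k) / e"
      using r_bound[rule_format, OF t e(1) Qk] e by (simp add: divide_right_mono)
    also have "\<dots> \<le> r t e0 k (Q $ k) / e0"
      using mono_onD[OF r_mono[rule_format, OF t Qk]] e \<open>0 < e0\<close> by simp
    also have "\<dots> \<le> w t"
      unfolding w_def using r_bound[rule_format, OF t \<open>0 < e0\<close> Qk] \<open>0 < e0\<close>
      by (intro member_le_sum) (auto intro: divide_nonneg_pos order_trans[OF abs_ge_zero])
    finally show "\<bar>(f (t + e) k (Q $ k) - f t k (Q $ k)) / e - ft t k (Q $ k)\<bar> \<le> w t" .
  qed
qed

definition reward_quotient_error
    :: "(real \<Rightarrow> 'n::finite \<Rightarrow> real^'n \<Rightarrow> real) \<Rightarrow> (real \<Rightarrow> 'n \<Rightarrow> real^'n \<Rightarrow> real)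
        \<Rightarrow> real^'n^'n \<Rightarrow> 'n \<Rightarrow> real \<Rightarrow> real \<Rightarrow> real" where
  "reward_quotient_error f ft Q j e t =
     (\<Sum>k\<in>UNIV. trans_mat t Q $ j $ k * ((f (t + e) k (Q $ k) - f t k (Q $ k)) / e - ft t k (Q $ k)))"

context regular_payoff
begin

lemma tendsto_difference_quotient_reward:
  assumes "q \<in> D k" and "0 \<le> t"
  shows "((\<lambda>e. (f (t + e) k q - f t k q) / e - ft t k q) \<longlongrightarrow> 0) (at_right 0)"
proof -
  have "((\<lambda>s. f s k q) has_real_derivative ft t k q) (at t within {t..})"
    using C1[OF assms(1)] assms(2) by (auto intro: has_field_derivative_subset)
  then show ?thesis
    by (rule LIM_zero[OF tendsto_right_difference_quotient])
qed

lemma set_integral_reward_quotient_error: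
  assumes Qs: "Qs \<in> gens D" and "0 < e"
  shows "set_integrable lborel {0..} (reward_quotient_error f ft Qs j e)"
    and "(LINT t:{0..}|lborel. reward_quotient_error f ft Qs j e t)
      = (continuation_payoff f Qs e j - payoff f Qs j - e * payoff ft Qs j) / e"
proof -
  define shifted where "shifted t = (\<Sum>k\<in>UNIV. trans_mat t Qs $ j $ k * f (t + e) k (Qs $ k))" for t
  have error_eq: "reward_quotient_error f ft Qs j e
      = (\<lambda>t. (shifted t - expected_reward f Qs j t) / e - expected_reward ft Qs j t)"
    by (simp add: fun_eq_iff reward_quotient_error_def shifted_def expected_reward_def sum_subtractf
        sum_divide_distrib[symmetric] right_diff_distrib diff_divide_distrib)
  have "set_integrable lborel {0..} shifted"
    and "continuation_payoff f Qs e j = (LINT t:{0..}|lborel. shifted t)"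
    using set_integral_shift[OF set_integrable_continuation_integrand[OF Qs _ less_imp_le[OF \<open>0 < e\<close>], of f j]]
    by (simp_all add: shifted_def[abs_def] continuation_payoff_def)
  moreover have "set_integrable lborel {0..} (expected_reward g Qs j)" if "g \<in> {f, ft}" for g
    using that by (intro set_integrable_expected_reward[OF Qs]) auto
  ultimately show "set_integrable lborel {0..} (reward_quotient_error f ft Qs j e)"
    and "(LINT t:{0..}|lborel. reward_quotient_error f ft Qs j e t)
      = (continuation_payoff f Qs e j - payoff f Qs j - e * payoff ft Qs j) / e"
    using \<open>0 < e\<close>
    by (simp_all add: error_eq set_integral_diff set_integrable_divide payoff_eq_expected_reward
        diff_divide_distrib)
qed

lemma tendsto_set_integral_reward_quotient_error:
  assumes Qs: "Qs \<in> gens D"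
  shows "((\<lambda>e. LINT t:{0..}|lborel. reward_quotient_error f ft Qs j e t) \<longlongrightarrow> 0) (at_right 0)"
proof -
  obtain e0 w where "0 < e0" and w_int: "set_integrable lborel {0..} w"
    and w_bound: "\<And>e t k. 0 < e \<Longrightarrow> e \<le> e0 \<Longrightarrow> 0 \<le> t \<Longrightarrow>
           \<bar>(f (t + e) k (Qs $ k) - f t k (Qs $ k)) / e - ft t k (Qs $ k)\<bar> \<le> w t"
    using cond_R_difference_quotient_bound[OF R Qs] by blast
  let ?\<Phi> = "\<lambda>e t. indicator {0..} t * reward_quotient_error f ft Qs j e t"
  have "((\<lambda>e. integral\<^sup>L lborel (?\<Phi> e)) \<longlongrightarrow> integral\<^sup>L lborel (\<lambda>t::real. 0::real)) (at_right 0)"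
  proof (rule integral_dominated_convergence_at_right[OF \<open>0 < e0\<close>,
        where w = "\<lambda>t. indicator {0..} t * (real CARD('n) * w t)"])
    show "integrable lborel (\<lambda>t. indicator {0..} t * (real CARD('n) * w t))"
      using set_integrable_mult_right[OF w_int, of "real CARD('n)"] by (simp add: set_integrable_def)
    show "?\<Phi> e \<in> borel_measurable lborel" if "e \<in> {0<..<e0}" for e
      using set_integral_reward_quotient_error(1)[OF Qs, of e j] that
      by (auto simp: set_integrable_def dest: borel_measurable_integrable)
    show "((\<lambda>e. ?\<Phi> e t) \<longlongrightarrow> 0) (at_right 0)" for t
      using tendsto_difference_quotient_reward[OF gens_row[OF Qs]]
      by (cases "0 \<le> t")
        (auto simp: reward_quotient_error_def intro!: tendsto_null_sum tendsto_mult_right_zero)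
    show "norm (?\<Phi> e t) \<le> indicator {0..} t * (real CARD('n) * w t)" if "e \<in> {0<..<e0}" for e t
    proof (cases "0 \<le> t")
      case True
      have "\<bar>trans_mat t Qs $ j $ k * ((f (t + e) k (Qs $ k) - f t k (Qs $ k)) / e - ft t k (Qs $ k))\<bar>
          \<le> w t" for k
        unfolding abs_mult
        using abs_trans_mat_le_1[OF gens_is_generator[OF Qs] True] w_bound[of e t k] that True
        by (intro order_trans[OF mult_left_le_one_le]) auto
      then have "\<bar>reward_quotient_error f ft Qs j e t\<bar> \<le> (\<Sum>k\<in>(UNIV::'n set). w t)"
        unfolding reward_quotient_error_def by (intro order_trans[OF sum_abs] sum_mono)
      then show ?thesis
        using True by simp
    qed simp
  qed simp
  then show ?thesis
    by (simp add: set_lebesgue_integral_def)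
qed

lemma continuation_payoff_expansion:
  assumes Qs: "Qs \<in> gens D"
  shows "(\<lambda>e. continuation_payoff f Qs e j - payoff f Qs j - e * payoff ft Qs j) \<in> o[at_right 0](\<lambda>e. e)"
proof (rule smalloI_tendsto)
  have "\<forall>\<^sub>F e in at_right 0. (LINT t:{0..}|lborel. reward_quotient_error f ft Qs j e t)
      = (continuation_payoff f Qs e j - payoff f Qs j - e * payoff ft Qs j) / e"
    using eventually_at_right_less[of "0::real"]
    by eventually_elim (rule set_integral_reward_quotient_error(2)[OF Qs])
  with tendsto_set_integral_reward_quotient_error[OF Qs, of j]
  show "((\<lambda>e. (continuation_payoff f Qs e j - payoff f Qs j - e * payoff ft Qs j) / e) \<longlongrightarrow> 0) (at_right 0)"
    by (rule Lim_transform_eventually)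
  show "\<forall>\<^sub>F e in at_right 0. e \<noteq> (0::real)"
    using eventually_at_right_less[of "0::real"] by eventually_elim simp
qed

end

definition reward_slope :: "(real \<Rightarrow> 'n::finite \<Rightarrow> real^'n \<Rightarrow> real) \<Rightarrow> (real \<Rightarrow> 'n \<Rightarrow> real^'n \<Rightarrow> real)
    \<Rightarrow> real^'n^'n \<Rightarrow> 'n \<Rightarrow> real" where
  "reward_slope f ft Q i = (\<Sum>k\<in>UNIV. Q $ i $ k * f 0 k (Q $ k)) + ft 0 i (Q $ i)"

lemma expected_reward_0: "expected_reward g Q i 0 = g 0 i (Q $ i)"
proof -
  have "trans_mat 0 Q $ i $ k * g 0 k (Q $ k) = (if k = i then g 0 i (Q $ i) else 0)" for k
    by (simp add: trans_mat_0 mat_def)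
  then show ?thesis
    by (simp add: expected_reward_def)
qed

lemma Lambda_eq:
  "Lambda f ft Qs i Q
    = reward_slope f ft Q i + 2 * (Q $ i \<bullet> payoff_vec ft Qs) + (Q ** Q) $ i \<bullet> payoff_vec f Qs"
proof -
  have "Q $ i \<bullet> (\<chi> j. Q $ j \<bullet> payoff_vec f Qs) = (Q ** Q) $ i \<bullet> payoff_vec f Qs"
    by (simp add: inner_vec_def matrix_matrix_mult_def sum_distrib_left sum_distrib_right mult.assoc)
      (rule sum.swap)
  then show ?thesis
    by (simp add: Lambda_def Gamma_vec_def Gamma_def reward_slope_def inner_add_right inner_vec_def
        sum.distrib sum_distrib_left algebra_simps)
qed

context regular_payoff
begin

lemma expected_reward_has_derivative_0:
  assumes Q: "Q \<in> gens D"
  shows "(expected_reward f Q i has_real_derivative reward_slope f ft Q i) (at 0 within {0..})"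
proof -
  have "((\<lambda>t. trans_mat t Q $ i $ k * f t k (Q $ k)) has_real_derivative
      Q $ i $ k * f 0 k (Q $ k) + ft 0 k (Q $ k) * trans_mat 0 Q $ i $ k) (at 0 within {0..})" for k
    using C1[OF gens_row[OF Q]] by (intro DERIV_mult trans_mat_entry_has_derivative_0) auto
  then have "(expected_reward f Q i has_real_derivative
      (\<Sum>k\<in>UNIV. Q $ i $ k * f 0 k (Q $ k) + ft 0 k (Q $ k) * trans_mat 0 Q $ i $ k)) (at 0 within {0..})"
    unfolding expected_reward_def[abs_def] by (rule DERIV_sum)
  moreover have "ft 0 k (Q $ k) * trans_mat 0 Q $ i $ k = (if k = i then ft 0 i (Q $ i) else 0)" for k
    by (simp add: trans_mat_0 mat_def)
  ultimately show ?thesis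
    by (simp add: reward_slope_def sum.distrib)
qed

lemma running_payoff_expansion:
  assumes Q: "Q \<in> gens D"
  shows "(\<lambda>e. (LINT t:{0..e}|lborel. expected_reward f Q i t) - e * f 0 i (Q $ i)
      - e\<^sup>2 / 2 * reward_slope f ft Q i) \<in> o[at_right 0](\<lambda>e. e\<^sup>2)"
  using set_integral_taylor2_at_right[OF expected_reward_has_derivative_0[OF Q]]
    set_integrable_expected_reward[OF Q]
  by (simp add: expected_reward_0)

lemma payoff_gap_eq:
  assumes Q: "Q \<in> gens D" and Qs: "Qs \<in> gens D" and "0 \<le> e"
  shows "payoff f Qs i - payoff_sw f e Q Qs i
    = (LINT t:{0..e}|lborel. expected_reward f Qs i t) - (LINT t:{0..e}|lborel. expected_reward f Q i t)
      + (\<Sum>j\<in>UNIV. (trans_mat e Qs $ i $ j - trans_mat e Q $ i $ j) * continuation_payoff f Qs e j)"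
  using payoff_sw_self[OF Qs \<open>0 \<le> e\<close>, of i] payoff_sw_eq[OF Qs Qs \<open>0 \<le> e\<close>, of i]
    payoff_sw_eq[OF Q Qs \<open>0 \<le> e\<close>, of i]
  by (simp add: left_diff_distrib sum_subtractf)

lemma payoff_gap_expansion:
  assumes Q: "Q \<in> gens D" and Qs: "Qs \<in> gens D"
  shows "(\<lambda>e. (payoff f Qs i - payoff_sw f e Q Qs i)
      - e * (Gamma f Qs i (Qs $ i) - Gamma f Qs i (Q $ i))
      - e\<^sup>2 / 2 * (Lambda f ft Qs i Qs - Lambda f ft Qs i Q)) \<in> o[at_right 0](\<lambda>e. e\<^sup>2)"
proof -
  define F where "F = payoff_vec f Qs"
  define G where "G = payoff_vec ft Qs"
  define a where "a = Qs $ i - Q $ i"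
  define b where "b = (Qs ** Qs) $ i - (Q ** Q) $ i"
  define running where "running P e = (LINT t:{0..e}|lborel. expected_reward f P i t)
      - e * f 0 i (P $ i) - e\<^sup>2 / 2 * reward_slope f ft P i" for P e
  define jump where "jump e j =
      (trans_mat e Qs $ i $ j - trans_mat e Q $ i $ j) * continuation_payoff f Qs e j
      - e * a $ j * F $ j - e\<^sup>2 * (a $ j * G $ j + b $ j * F $ j / 2)" for e j
  have "(\<lambda>e. jump e j) \<in> o[at_right 0](\<lambda>e. e\<^sup>2)" for j
    unfolding jump_def
    using smallo_product_expansion[OF trans_mat_difference_expansion continuation_payoff_expansion[OF Qs]]
    by (simp add: a_def b_def F_def G_def payoff_vec_def)
  then have "(\<lambda>e. running Qs e - running Q e + (\<Sum>j\<in>UNIV. jump e j)) \<in> o[at_right 0](\<lambda>e. e\<^sup>2)"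
    unfolding running_def by (intro sum_in_smallo running_payoff_expansion Q Qs big_sum_in_smallo) auto
  moreover have "\<forall>\<^sub>F e in at_right 0. running Qs e - running Q e + (\<Sum>j\<in>UNIV. jump e j)
    = (payoff f Qs i - payoff_sw f e Q Qs i) - e * (Gamma f Qs i (Qs $ i) - Gamma f Qs i (Q $ i))
      - e\<^sup>2 / 2 * (Lambda f ft Qs i Qs - Lambda f ft Qs i Q)"
    using eventually_at_right_less[of "0::real"]
  proof eventually_elim
    case (elim e)
    have Gamma_gap:
      "Gamma f Qs i (Qs $ i) - Gamma f Qs i (Q $ i) = f 0 i (Qs $ i) - f 0 i (Q $ i) + a \<bullet> F"
      by (simp add: Gamma_def a_def F_def inner_diff_left)
    have Lambda_gap: "Lambda f ft Qs i Qs - Lambda f ft Qs i Q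
        = reward_slope f ft Qs i - reward_slope f ft Q i + 2 * (a \<bullet> G) + b \<bullet> F"
      by (simp add: Lambda_eq a_def b_def F_def G_def inner_diff_left algebra_simps)
    show ?case
      unfolding payoff_gap_eq[OF Q Qs less_imp_le[OF elim]] Gamma_gap Lambda_gap
      by (simp add: running_def jump_def inner_vec_def sum_subtractf sum.distrib sum_distrib_left
          sum_divide_distrib algebra_simps power2_eq_square)
  qed
  ultimately show ?thesis
    by (rule landau_o.small.in_cong[THEN iffD1, rotated])
qed

end

section \<open>Equilibria\<close>

lemma eventually_at_right_0_iff:
  "(\<forall>\<^sub>F e in at_right 0. P e) \<longleftrightarrow> (\<exists>\<epsilon>>0. \<forall>e. 0 < e \<and> e \<le> \<epsilon> \<longrightarrow> P (e::real))"
proof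
  assume "\<forall>\<^sub>F e in at_right 0. P e"
  then obtain b where "0 < b" "\<And>e. 0 < e \<Longrightarrow> e < b \<Longrightarrow> P e"
    by (auto simp: eventually_at_right_field)
  then show "\<exists>\<epsilon>>0. \<forall>e. 0 < e \<and> e \<le> \<epsilon> \<longrightarrow> P e"
    by (intro exI[of _ "b / 2"]) auto
next
  assume "\<exists>\<epsilon>>0. \<forall>e. 0 < e \<and> e \<le> \<epsilon> \<longrightarrow> P e"
  then show "\<forall>\<^sub>F e in at_right 0. P e"
    by (auto simp: eventually_at_right_field)
qed

lemma strong_eq_iff_eventually:
  "strong_eq D f Qs \<longleftrightarrow> (\<forall>Q\<in>gens D. \<forall>i. \<forall>\<^sub>F e in at_right 0. payoff_sw f e Q Qs i \<le> payoff f Qs i)"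
  by (simp add: strong_eq_def eventually_at_right_0_iff)

context regular_payoff
begin

lemma weak_eq_Gamma_le:
  assumes "weak_eq D f Qs" and Qs: "Qs \<in> gens D" and Q: "Q \<in> gens D"
  shows "Gamma f Qs i (Q $ i) \<le> Gamma f Qs i (Qs $ i)"
proof -
  have "((\<lambda>e. (payoff f Qs i - payoff_sw f e Q Qs i) / e) \<longlongrightarrow> Gamma f Qs i (Qs $ i) - Gamma f Qs i (Q $ i))
      (at_right 0)"
    by (rule second_order_expansion_tendsto(1)[OF payoff_gap_expansion[OF Q Qs]])
  then have "Liminf (at_right 0) (\<lambda>e. ereal ((payoff f Qs i - payoff_sw f e Q Qs i) / e))
      = ereal (Gamma f Qs i (Qs $ i) - Gamma f Qs i (Q $ i))"
    by (intro lim_imp_Liminf tendsto_ereal) simp_all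
  moreover have "0 \<le> Liminf (at_right 0) (\<lambda>e. ereal ((payoff f Qs i - payoff_sw f e Q Qs i) / e))"
    using assms(1) Q by (simp add: weak_eq_def)
  ultimately show ?thesis
    by simp
qed

lemma payoff_sw_eventually_le:
  assumes "weak_eq D f Qs" and Qs: "Qs \<in> gens D" and Q: "Q \<in> gens D"
    and "Q \<noteq> Qs \<Longrightarrow> Gamma f Qs i (Qs $ i) = Gamma f Qs i (Q $ i) \<Longrightarrow>
           Lambda f ft Qs i Q < Lambda f ft Qs i Qs"
  shows "\<forall>\<^sub>F e in at_right 0. payoff_sw f e Q Qs i \<le> payoff f Qs i"
proof (cases "Q = Qs")
  case True
  show ?thesis
    using eventually_at_right_less[of "0::real"]
    by eventually_elim (simp add: True payoff_sw_self[OF Qs])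
next
  case False
  have "\<forall>\<^sub>F e in at_right 0. 0 < payoff f Qs i - payoff_sw f e Q Qs i"
    using weak_eq_Gamma_le[OF assms(1-3), of i] assms(4) False
    by (intro eventually_pos_of_second_order_expansion[OF payoff_gap_expansion[OF Q Qs]]) auto
  then show ?thesis
    by eventually_elim simp
qed

lemma payoff_sw_eventually_gt:
  assumes Qs: "Qs \<in> gens D" and Q: "Q \<in> gens D"
    and "Gamma f Qs i (Qs $ i) = Gamma f Qs i (Q $ i)" and "Lambda f ft Qs i Qs < Lambda f ft Qs i Q"
  shows "\<forall>\<^sub>F e in at_right 0. payoff f Qs i < payoff_sw f e Q Qs i"
proof -
  have "\<forall>\<^sub>F e in at_right 0. payoff f Qs i - payoff_sw f e Q Qs i < 0"
    using assms(3,4)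
    by (intro eventually_neg_of_second_order_expansion[OF payoff_gap_expansion[OF Q Qs]]) auto
  then show ?thesis
    by eventually_elim simp
qed

end

theorem mainTheorem5:
  fixes D :: "'n::finite \<Rightarrow> (real^'n) set"
    and f ft :: "real \<Rightarrow> 'n \<Rightarrow> real^'n \<Rightarrow> real"
    and Qs :: "real^'n^'n"
  assumes D_sub: "\<And>i. D i \<subseteq> E_set i"
    and I_f: "cond_I D f"
    and C1: "\<And>i q. q \<in> D i \<Longrightarrow>
               (\<forall>t\<ge>0. ((\<lambda>s. f s i q) has_real_derivative ft t i q) (at t within {0..}))
               \<and> continuous_on {0..} (\<lambda>t. ft t i q)"
    and I_ft: "cond_I D ft"
    and R: "cond_R D f ft"
    and Qs_in: "Qs \<in> gens D"
    and weak: "weak_eq D f Qs"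
  defines "RR \<equiv> {(i, Q). Q \<in> gens D - {Qs} \<and> Gamma f Qs i (Qs $ i) = Gamma f Qs i (Q $ i)}"
  shows "((\<forall>(i, Q)\<in>RR. Lambda f ft Qs i Qs > Lambda f ft Qs i Q) \<longrightarrow> strong_eq D f Qs)
       \<and> ((\<exists>(i, Q)\<in>RR. Lambda f ft Qs i Qs < Lambda f ft Qs i Q) \<longrightarrow> \<not> strong_eq D f Qs)"
proof -
  interpret regular_payoff D f ft
    using D_sub I_f C1 I_ft R by unfold_locales
  show ?thesis
  proof (intro conjI impI)
    assume "\<forall>(i, Q)\<in>RR. Lambda f ft Qs i Qs > Lambda f ft Qs i Q"
    then show "strong_eq D f Qs"
      unfolding strong_eq_iff_eventually
      by (auto simp: RR_def intro!: payoff_sw_eventually_le[OF weak Qs_in])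
  next
    assume "\<exists>(i, Q)\<in>RR. Lambda f ft Qs i Qs < Lambda f ft Qs i Q"
    then obtain i Q where Q: "Q \<in> gens D"
      and gt: "\<forall>\<^sub>F e in at_right 0. payoff f Qs i < payoff_sw f e Q Qs i"
      by (auto simp: RR_def dest: payoff_sw_eventually_gt[OF Qs_in])
    show "\<not> strong_eq D f Qs"
    proof
      assume "strong_eq D f Qs"
      with Q have "\<forall>\<^sub>F e in at_right 0. payoff_sw f e Q Qs i \<le> payoff f Qs i"
        by (simp add: strong_eq_iff_eventually)
      with gt have "\<forall>\<^sub>F e in at_right (0::real). False"
        by eventually_elim simp
      then show False
        by simp
    qed
  qed
qed

end
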